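(* For the sequence $\{\bm g^t=(\bm\beta^t,\bm z^t,\bm u^t)\}$ generated by the parallel PPA or the improved parallel PPA, $$\|\bm g^t-\bm g^{t+1}\|_{\bm H_*}^2\le\|\bm g^{t-1}-\bm g^t\|_{\bm H_*}^2,$$ where $\bm H_*=\bm H$ for the parallel PPA and $\bm H_*=\bm H_K$ for the improved parallel PPA.
   Context: Dantzig selector in split form: with $\bm X=(\bm X_1,\dots,\bm X_K)\in\mathbb R^{n\times p}$, $\bm y\in\mathbb R^n$, $\bm A=\bm X^\top\bm X=(\bm A_1,\dots,\bm A_K)$, $\bm A_i=\bm X^\top\bm X_i\in\mathbb R^{p\times p_i}$, $\bm\beta=(\bm\beta_{1\cdot}^\top,\dots,\bm\beta_{K\cdot}^\top)^\top$, solve $\min_{\bm\beta,\bm z}\sum_i\|\bm\beta_{i\cdot}\|_1+\delta(\bm z)$ s.t. $\sum_i\bm A_i\bm\beta_{i\cdot}-\bm z=\bm X^\top\bm y$, where $\delta$ is the indicator of $\{\bm z:\|\bm z\|_\infty\le n\lambda\}$. Parallel PPA with $\mu>0$ and $\eta$ larger than the largest eigenvalue of $\mu\bm A^\top\bm A$: $\bm\beta_{i\cdot}^{t+1}=\mathrm{sign}(\bm v_i)\odot\max\{|\bm v_i|-1/\eta,0\}$ with $\bm v_i=\bm\beta_{i\cdot}^t+\bm A_i^\top\bm u^t/\eta$; $\bm z^{t+1}=\min\{\max\{\bm z^t-\bm u^t/\mu,-n\lambda\},n\lambda\}$; $\bm u^{t+1}=\bm u^t-\frac{\mu}{2}[2(\bm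 A\bm\beta^{t+1}-\bm z^{t+1}-\bm X^\top\bm y)-(\bm A\bm\beta^t-\bm z^t-\bm X^\top\bm y)]$. Improved parallel PPA: same but $\eta$ replaced by $\eta_i$ (larger than the largest eigenvalue of $\mu\bm A_i^\top\bm A_i$) in block $i$, and $\frac{\mu}{2}$ replaced by $\frac{\mu}{K+1}$ in the $\bm u$ update. $\|\bm v\|_{\bm H}=\sqrt{\bm v^\top\bm H\bm v}$, with $\bm H=\begin{pmatrix}\eta\bm I_p&\bm 0&\bm A^\top\\\bm 0&\mu\bm I_p&-\bm I_p\\\bm A&-\bm I_p&\frac{2}{\mu}\bm I_p\end{pmatrix}$ and $\bm H_K=\begin{pmatrix}\mathrm{diag}(\eta_1\bm I_{p_1},\dots,\eta_K\bm I_{p_K},\mu\bm I_p)&\bm G^\top\\\bm G&\frac{K+1}{\mu}\bm I_p\end{pmatrix}$, $\bm G=(\bm A_1,\dots,\bm A_K,-\bm I_p)$; both positive definite. *)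

theory Defs
  imports "HOL-Analysis.Analysis"
begin

text \<open>Coordinates of beta, z, u are indexed by the finite type 'p (so p = CARD('p)),
  samples by the finite type 'n (so n = CARD('n)).  The K column blocks are encoded by
  a block-assignment function blk :: 'p => nat with values < K; block i is
  {j. blk j = i}.\<close>

definition gram :: "real^'p^'n \<Rightarrow> real^'p^'p" where
  "gram X = transpose X ** X"

definition is_eigenvalue :: "real^'p^'p \<Rightarrow> real \<Rightarrow> bool" where
  "is_eigenvalue M c \<longleftrightarrow> (\<exists>v. v \<noteq> 0 \<and> M *v v = c *s v)"

text \<open>c is an eigenvalue of the principal submatrix of M on the index set
  {j. blk j = i} (for M = mu A^T A this submatrix is mu A_i^T A_i).\<close>
definition is_block_eigenvalue :: "real^'p^'p \<Rightarrow> ('p \<Rightarrow> nat) \<Rightarrow> nat \<Rightarrow> real \<Rightarrow> bool" where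
  "is_block_eigenvalue M blk i c \<longleftrightarrow>
     (\<exists>v. v \<noteq> 0 \<and> (\<forall>j. blk j \<noteq> i \<longrightarrow> v $ j = 0) \<and>
          (\<forall>j. blk j = i \<longrightarrow> (M *v v) $ j = c * v $ j))"

definition soft :: "real \<Rightarrow> real \<Rightarrow> real" where
  "soft v a = sgn v * max (\<bar>v\<bar> - a) 0"

definition clamp :: "real \<Rightarrow> real \<Rightarrow> real" where
  "clamp v b = min (max v (- b)) b"

definition ppa_step ::
  "real^'p^'n \<Rightarrow> real^'n \<Rightarrow> real \<Rightarrow> real \<Rightarrow> real \<Rightarrow>
   real^'p \<Rightarrow> real^'p \<Rightarrow> real^'p \<Rightarrow> real^'p \<Rightarrow> real^'p \<Rightarrow> real^'p \<Rightarrow> bool" where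
  "ppa_step X y lam mu eta b z u b' z' u' \<longleftrightarrow>
     (let A = gram X; c = transpose X *v y; n = real CARD('n) in
      b' = (\<chi> j. soft (b $ j + (transpose A *v u) $ j / eta) (1 / eta)) \<and>
      z' = (\<chi> j. clamp (z $ j - u $ j / mu) (n * lam)) \<and>
      u' = u - (mu / 2) *s (2 *s (A *v b' - z' - c) - (A *v b - z - c)))"

definition ippa_step ::
  "real^'p^'n \<Rightarrow> real^'n \<Rightarrow> real \<Rightarrow> ('p \<Rightarrow> nat) \<Rightarrow> nat \<Rightarrow> real \<Rightarrow> (nat \<Rightarrow> real) \<Rightarrow>
   real^'p \<Rightarrow> real^'p \<Rightarrow> real^'p \<Rightarrow> real^'p \<Rightarrow> real^'p \<Rightarrow> real^'p \<Rightarrow> bool" where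
  "ippa_step X y lam blk K mu eta b z u b' z' u' \<longleftrightarrow>
     (let A = gram X; c = transpose X *v y; n = real CARD('n) in
      b' = (\<chi> j. soft (b $ j + (transpose A *v u) $ j / eta (blk j)) (1 / eta (blk j))) \<and>
      z' = (\<chi> j. clamp (z $ j - u $ j / mu) (n * lam)) \<and>
      u' = u - (mu / real (K + 1)) *s (2 *s (A *v b' - z' - c) - (A *v b - z - c)))"

text \<open>||(b,z,u)||_H^2 for H = [[eta I, 0, A^T],[0, mu I, -I],[A, -I, (2/mu) I]],
  written out as the quadratic form.\<close>
definition H_normsq ::
  "real^'p^'p \<Rightarrow> real \<Rightarrow> real \<Rightarrow> real^'p \<Rightarrow> real^'p \<Rightarrow> real^'p \<Rightarrow> real" where
  "H_normsq A mu eta b z u =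
     eta * (b \<bullet> b) + 2 * (b \<bullet> (transpose A *v u)) + mu * (z \<bullet> z)
     - 2 * (z \<bullet> u) + (2 / mu) * (u \<bullet> u)"

text \<open>||(b,z,u)||_{H_K}^2 for H_K = [[diag(eta_1 I,...,eta_K I, mu I), G^T],[G, (K+1)/mu I]],
  G = (A_1,...,A_K,-I), so that G (b,z) = A b - z; written out as the quadratic form.\<close>
definition HK_normsq ::
  "real^'p^'p \<Rightarrow> ('p \<Rightarrow> nat) \<Rightarrow> nat \<Rightarrow> real \<Rightarrow> (nat \<Rightarrow> real) \<Rightarrow>
   real^'p \<Rightarrow> real^'p \<Rightarrow> real^'p \<Rightarrow> real" where
  "HK_normsq A blk K mu eta b z u =
     (\<Sum>j\<in>UNIV. eta (blk j) * (b $ j)^2) + mu * (z \<bullet> z)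
     + 2 * (u \<bullet> (A *v b - z)) + (real (K + 1) / mu) * (u \<bullet> u)"

end

theory Submission
  imports Defs
begin

text \<open>Both iterations are proximal point steps g(t+1) = T g(t) whose beta- and z-updates apply
  the firmly nonexpansive maps soft-thresholding and clamping. The multiplier update is exactly
  what combines the two resulting proximal inequalities into
  <(g(t-1) - g(t)) - (g(t) - g(t+1)), g(t) - g(t+1)>_H >= 0, and for positive semidefinite H the
  identity |a|^2 = |b|^2 + |a - b|^2 + 2 <a - b, b> then gives the monotonicity of
  |g(t) - g(t+1)|_H. H_K is positive semidefinite as a sum of squares over the blocks, each
  controlled by mu |A_i x|^2 <= eta_i |x|^2; this bound holds because the Rayleigh quotient of a
  symmetric matrix on a coordinate block is maximal at a block eigenvector. The parallel PPA is
  the one-block case K = 1 of the improved one.\<close>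

definition firmly_nonexpansive :: "(real \<Rightarrow> real) \<Rightarrow> bool" where
  "firmly_nonexpansive f \<longleftrightarrow> (\<forall>x y. (f x - f y)\<^sup>2 \<le> (f x - f y) * (x - y))"

lemma firmly_nonexpansive_if_mono_nonexpansive:
  assumes "\<And>x y. y \<le> x \<Longrightarrow> 0 \<le> f x - f y \<and> f x - f y \<le> x - y"
  shows "firmly_nonexpansive f"
  unfolding firmly_nonexpansive_def
proof (intro allI)
  fix x y
  have "0 \<le> f x - f y \<and> f x - f y \<le> x - y \<or> x - y \<le> f x - f y \<and> f x - f y \<le> 0"
    using assms[of x y] assms[of y x] by (cases "y \<le> x") auto
  then show "(f x - f y)\<^sup>2 \<le> (f x - f y) * (x - y)"
    unfolding power2_eq_square by (metis mult_left_mono mult_left_mono_neg)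
qed

lemma firmly_nonexpansive_soft: "0 \<le> a \<Longrightarrow> firmly_nonexpansive (\<lambda>v. soft v a)"
  by (rule firmly_nonexpansive_if_mono_nonexpansive) (auto simp: soft_def sgn_if max_def)

lemma firmly_nonexpansive_clamp: "firmly_nonexpansive (\<lambda>v. clamp v r)"
  by (rule firmly_nonexpansive_if_mono_nonexpansive) (auto simp: clamp_def min_def max_def)

lemma firmly_nonexpansive_prox_ineq:
  fixes x x' p p' :: real
  assumes "firmly_nonexpansive f" and "0 < e"
  defines "d \<equiv> f (x + p / e) - f (x' + p' / e)"
  shows "0 \<le> e * d * (x - x' - d) + d * (p - p')"
proof -
  have "d\<^sup>2 \<le> d * ((x - x') + (p - p') / e)"
    using assms(1) unfolding firmly_nonexpansive_def d_def
    by (metis add_diff_add diff_divide_distrib)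
  then have "e * d\<^sup>2 \<le> e * (d * ((x - x') + (p - p') / e))"
    using \<open>0 < e\<close> by (simp add: mult_left_mono)
  moreover have "e * (d * ((x - x') + (p - p') / e)) = e * d * (x - x') + d * (p - p')"
    using \<open>0 < e\<close> by (simp add: field_simps)
  ultimately show ?thesis
    by (simp add: power2_eq_square algebra_simps)
qed

lemma firmly_nonexpansive_prox_vec_ineq:
  fixes x x' p p' :: "real^'p::finite"
  assumes "\<And>j. firmly_nonexpansive (f j)" and "\<And>j. 0 < e j"
    and "y = (\<chi> j. f j (x$j + p$j / e j))" and "y' = (\<chi> j. f j (x'$j + p'$j / e j))"
  shows "0 \<le> (\<Sum>j\<in>UNIV. e j * (y - y')$j * ((x - x') - (y - y'))$j) + (y - y') \<bullet> (p - p')"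
proof -
  have "0 \<le> (\<Sum>j\<in>UNIV. e j * (y - y')$j * ((x - x') - (y - y'))$j + (y - y')$j * (p - p')$j)"
    using firmly_nonexpansive_prox_ineq[OF assms(1,2)] assms(3,4) by (intro sum_nonneg) simp
  then show ?thesis
    by (simp add: inner_vec_def sum.distrib)
qed

lemma inner_transpose_matrix_vector:
  fixes A :: "real^'m::finite^'n::finite"
  shows "x \<bullet> (transpose A *v y) = (A *v x) \<bullet> y"
  by (metis dot_lmul_matrix inner_commute transpose_matrix_vector)

text \<open>\<open>ppa_inner A e mu kap\<close> is the bilinear form of the symmetric matrix
  [[diag e, 0, A^T], [0, mu I, -I], [A, -I, I / kap]] on triples (beta, z, u): \<open>kap = mu / 2\<close>
  with constant weights e gives H, \<open>kap = mu / (K + 1)\<close> with \<open>e j = eta (blk j)\<close> gives H_K.\<close>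

type_synonym 'p ppa_point = "(real^'p) \<times> (real^'p) \<times> (real^'p)"

fun ppa_inner :: "real^'p^'p \<Rightarrow> ('p::finite \<Rightarrow> real) \<Rightarrow> real \<Rightarrow> real \<Rightarrow>
    'p ppa_point \<Rightarrow> 'p ppa_point \<Rightarrow> real" where
  "ppa_inner A e mu kap (b, z, u) (b', z', u') =
     (\<Sum>j\<in>UNIV. e j * b$j * b'$j) + (A *v b) \<bullet> u' + (A *v b') \<bullet> u
     + mu * (z \<bullet> z') - z \<bullet> u' - z' \<bullet> u + (u \<bullet> u') / kap"

lemma ppa_inner_expand:
  "ppa_inner A e mu kap a a
     = ppa_inner A e mu kap b b + ppa_inner A e mu kap (a - b) (a - b)
       + 2 * ppa_inner A e mu kap (a - b) b"
proof -
  obtain ba za ua bb zb ub where ab: "a = (ba, za, ua)" "b = (bb, zb, ub)" by (cases a; cases b)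
  have "(\<Sum>j\<in>UNIV. e j * ba$j * ba$j) = (\<Sum>j\<in>UNIV. e j * bb$j * bb$j)
     + (\<Sum>j\<in>UNIV. e j * (ba - bb)$j * (ba - bb)$j) + 2 * (\<Sum>j\<in>UNIV. e j * (ba - bb)$j * bb$j)"
    by (simp add: sum_distrib_left sum.distrib[symmetric] algebra_simps)
  moreover have "ua \<bullet> ua / kap
      = ub \<bullet> ub / kap + (ua - ub) \<bullet> (ua - ub) / kap + 2 * ((ua - ub) \<bullet> ub / kap)"
    by (simp add: inner_diff_left inner_diff_right inner_commute add_divide_distrib
        diff_divide_distrib)
  ultimately show ?thesis unfolding ab
    by (simp add: inner_commute algebra_simps)
qed

lemma ppa_inner_le_if_nonneg:
  assumes "0 \<le> ppa_inner A e mu kap (a - b) (a - b)" and "0 \<le> ppa_inner A e mu kap (a - b) b"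
  shows "ppa_inner A e mu kap b b \<le> ppa_inner A e mu kap a a"
  using assms ppa_inner_expand[of A e mu kap a b] by linarith

fun ppa_update :: "real^'p^'p \<Rightarrow> real^'p \<Rightarrow> real \<Rightarrow> real \<Rightarrow> real \<Rightarrow> ('p::finite \<Rightarrow> real) \<Rightarrow>
    'p ppa_point \<Rightarrow> 'p ppa_point" where
  "ppa_update A c r mu kap e (b, z, u) =
     (let b' = (\<chi> j. soft (b$j + (transpose A *v u)$j / e j) (1 / e j));
          z' = (\<chi> j. clamp (z$j - u$j / mu) r)
      in (b', z', u - kap *s (2 *s (A *v b' - z' - c) - (A *v b - z - c))))"

lemma ppa_inner_if_multiplier_step:
  assumes "0 < kap" and "xu = kap *\<^sub>R ((A *v db - dz) - (A *v xb - xz))"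
  shows "ppa_inner A e mu kap (xb, xz, xu) (db, dz, du)
    = ((\<Sum>j\<in>UNIV. e j * db$j * xb$j) + (A *v db) \<bullet> (xu + du))
      + (mu * (dz \<bullet> xz) - dz \<bullet> (xu + du))"
proof -
  have "(xu \<bullet> du) / kap = (A *v db - dz) \<bullet> du - (A *v xb - xz) \<bullet> du"
    using assms by (simp add: inner_diff_left)
  then show ?thesis
    by (simp add: inner_commute algebra_simps)
qed

lemma ppa_update_inner_nonneg:
  fixes A :: "real^'p::finite^'p"
  assumes e: "\<And>j. 0 < e j" and mu: "0 < mu" and kap: "0 < kap"
    and g1: "g1 = ppa_update A c r mu kap e g0" and g2: "g2 = ppa_update A c r mu kap e g1"
  shows "0 \<le> ppa_inner A e mu kap ((g0 - g1) - (g1 - g2)) (g1 - g2)"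
proof -
  obtain b0 z0 u0 where g0: "g0 = (b0, z0, u0)" by (cases g0)
  obtain b1 z1 u1 where g1': "g1 = (b1, z1, u1)" by (cases g1)
  obtain b2 z2 u2 where g2': "g2 = (b2, z2, u2)" by (cases g2)
  have b1: "b1 = (\<chi> j. soft (b0$j + (transpose A *v u0)$j / e j) (1 / e j))"
    and z1: "z1 = (\<chi> j. clamp (z0$j + (- u0)$j / mu) r)"
    and u1: "u1 = u0 - kap *s (2 *s (A *v b1 - z1 - c) - (A *v b0 - z0 - c))"
    using g1 unfolding g0 g1' by (auto simp: Let_def)
  have b2: "b2 = (\<chi> j. soft (b1$j + (transpose A *v u1)$j / e j) (1 / e j))"
    and z2: "z2 = (\<chi> j. clamp (z1$j + (- u1)$j / mu) r)"
    and u2: "u2 = u1 - kap *s (2 *s (A *v b2 - z2 - c) - (A *v b1 - z1 - c))"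
    using g2 unfolding g1' g2' by (auto simp: Let_def)
  have beta_ineq: "0 \<le> (\<Sum>j\<in>UNIV. e j * (b1 - b2)$j * ((b0 - b1) - (b1 - b2))$j)
      + (A *v (b1 - b2)) \<bullet> (u0 - u1)"
    using firmly_nonexpansive_prox_vec_ineq[OF firmly_nonexpansive_soft e b1 b2] e
    unfolding matrix_vector_mult_diff_distrib[symmetric] inner_transpose_matrix_vector
    by (simp add: less_imp_le)
  have z_ineq: "0 \<le> mu * ((z1 - z2) \<bullet> ((z0 - z1) - (z1 - z2))) - (z1 - z2) \<bullet> (u0 - u1)"
  proof -
    have "(\<Sum>j\<in>UNIV. mu * (z1 - z2)$j * ((z0 - z1) - (z1 - z2))$j)
        = mu * ((z1 - z2) \<bullet> ((z0 - z1) - (z1 - z2)))"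
      unfolding inner_vec_def sum_distrib_left by (simp add: mult.assoc)
    then show ?thesis
      using firmly_nonexpansive_prox_vec_ineq[OF firmly_nonexpansive_clamp mu z1 z2]
      by (simp add: inner_diff_right)
  qed
  have u_step: "u0 - u1 - (u1 - u2) = kap *\<^sub>R ((A *v (b1 - b2) - (z1 - z2))
      - (A *v ((b0 - b1) - (b1 - b2)) - ((z0 - z1) - (z1 - z2))))"
    unfolding u1 u2 matrix_vector_mult_diff_distrib by (simp add: vec_eq_iff algebra_simps)
  have "ppa_inner A e mu kap ((g0 - g1) - (g1 - g2)) (g1 - g2)
      = ((\<Sum>j\<in>UNIV. e j * (b1 - b2)$j * ((b0 - b1) - (b1 - b2))$j)
          + (A *v (b1 - b2)) \<bullet> (u0 - u1))
      + (mu * ((z1 - z2) \<bullet> ((z0 - z1) - (z1 - z2))) - (z1 - z2) \<bullet> (u0 - u1))"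
    using ppa_inner_if_multiplier_step[OF kap u_step, where e = e and mu = mu and du = "u1 - u2"]
    unfolding g0 g1' g2' diff_Pair by simp
  with beta_ineq z_ineq show ?thesis by linarith
qed

lemma ppa_update_contraction:
  fixes A :: "real^'p::finite^'p"
  assumes "\<And>j. 0 < e j" and "0 < mu" and "0 < kap"
    and psd: "\<And>g. 0 \<le> ppa_inner A e mu kap g g"
    and "g1 = ppa_update A c r mu kap e g0" and "g2 = ppa_update A c r mu kap e g1"
  shows "ppa_inner A e mu kap (g1 - g2) (g1 - g2) \<le> ppa_inner A e mu kap (g0 - g1) (g0 - g1)"
  by (rule ppa_inner_le_if_nonneg[OF psd ppa_update_inner_nonneg[OF assms(1-3,5,6)]])

lemma linear_coeff_eq_0_if_quadratic_nonneg:
  fixes a b :: real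
  assumes "\<And>t. 0 \<le> 2 * t * a + t\<^sup>2 * b"
  shows "a = 0"
proof (rule ccontr)
  assume "a \<noteq> 0"
  define s where "s = 1 / (\<bar>b\<bar> + 1)"
  have "0 < s" "s * b < 2"
    unfolding s_def by (auto simp: field_simps abs_if)
  have "0 \<le> a\<^sup>2 * s * (s * b - 2)"
    using assms[of "- a * s"] by (simp add: power2_eq_square algebra_simps)
  moreover have "a\<^sup>2 * s * (s * b - 2) < 0"
    using \<open>a \<noteq> 0\<close> \<open>0 < s\<close> \<open>s * b < 2\<close> by (simp add: mult_pos_neg)
  ultimately show False by simp
qed

lemma Rayleigh_maximizer_block_eigenvalue:
  fixes M :: "real^'p::finite^'p"
  assumes sym: "\<And>x y. x \<bullet> (M *v y) = y \<bullet> (M *v x)"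
    and max: "\<And>x. \<forall>j. blk j \<noteq> i \<longrightarrow> x$j = 0 \<Longrightarrow> x \<bullet> (M *v x) \<le> c * (x \<bullet> x)"
    and v: "v \<noteq> 0" "\<forall>j. blk j \<noteq> i \<longrightarrow> v$j = 0" "v \<bullet> (M *v v) = c * (v \<bullet> v)"
  shows "is_block_eigenvalue M blk i c"
  unfolding is_block_eigenvalue_def
proof (intro exI conjI allI impI)
  fix j assume "blk j = i"
  define w :: "real^'p" where "w = axis j 1"
  have "0 \<le> 2 * t * (w \<bullet> (c *\<^sub>R v - M *v v)) + t\<^sup>2 * (w \<bullet> (c *\<^sub>R w - M *v w))" for t
  proof -
    have "(v + t *\<^sub>R w) \<bullet> (M *v (v + t *\<^sub>R w)) \<le> c * ((v + t *\<^sub>R w) \<bullet> (v + t *\<^sub>R w))"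
      using max v(2) \<open>blk j = i\<close> by (simp add: w_def axis_def)
    then show ?thesis
      using sym[of v w] v(3)
      by (simp add: inner_commute power2_eq_square algebra_simps)
  qed
  then have "w \<bullet> (c *\<^sub>R v - M *v v) = 0"
    by (rule linear_coeff_eq_0_if_quadratic_nonneg)
  then show "(M *v v)$j = c * v$j"
    by (simp add: w_def inner_axis')
qed (use v in auto)

lemma Rayleigh_quotient_attains_max:
  fixes M :: "real^'p::finite^'p"
  assumes "blk j0 = i"
  obtains v where "v \<bullet> v = 1" "\<forall>j. blk j \<noteq> i \<longrightarrow> v$j = 0"
    "\<And>x. \<forall>j. blk j \<noteq> i \<longrightarrow> x$j = 0 \<Longrightarrow> x \<bullet> (M *v x) \<le> (v \<bullet> (M *v v)) * (x \<bullet> x)"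
proof -
  define S where "S = sphere (0::real^'p) 1 \<inter> (\<Inter>j\<in>{j. blk j \<noteq> i}. {x. x$j = 0})"
  have "compact S" unfolding S_def
    by (intro compact_Int_closed compact_sphere closed_INT)
      (simp add: closed_Collect_eq continuous_on_component)
  moreover have "axis j0 1 \<in> S" using assms by (auto simp: S_def) (auto simp: axis_def)
  moreover have "continuous_on S (\<lambda>x. x \<bullet> (M *v x))" by (intro continuous_intros)
  ultimately obtain v where "v \<in> S" and vmax: "\<And>y. y \<in> S \<Longrightarrow> y \<bullet> (M *v y) \<le> v \<bullet> (M *v v)"
    using continuous_attains_sup[of S] by blast
  have "x \<bullet> (M *v x) \<le> (v \<bullet> (M *v v)) * (x \<bullet> x)" if x: "\<forall>j. blk j \<noteq> i \<longrightarrow> x$j = 0" for x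
  proof (cases "x = 0")
    case False
    then have "(x /\<^sub>R norm x) \<in> S" using x by (simp add: S_def)
    then have "(x /\<^sub>R norm x) \<bullet> (M *v (x /\<^sub>R norm x)) \<le> v \<bullet> (M *v v)" by (rule vmax)
    with False show ?thesis
      by (simp add: matrix_vector_mult_scaleR dot_square_norm power2_eq_square field_simps)
  qed simp
  with \<open>v \<in> S\<close> show ?thesis
    by (intro that) (auto simp: S_def dot_square_norm)
qed

lemma symmetric_block_eigenvalue_max:
  fixes M :: "real^'p::finite^'p"
  assumes sym: "\<And>x y. x \<bullet> (M *v y) = y \<bullet> (M *v x)" and "blk j0 = i"
  obtains c where "is_block_eigenvalue M blk i c"
    and "\<And>x. \<forall>j. blk j \<noteq> i \<longrightarrow> x$j = 0 \<Longrightarrow> x \<bullet> (M *v x) \<le> c * (x \<bullet> x)"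
proof -
  obtain v where v: "v \<bullet> v = 1" "\<forall>j. blk j \<noteq> i \<longrightarrow> v$j = 0"
    and max: "\<And>x. \<forall>j. blk j \<noteq> i \<longrightarrow> x$j = 0 \<Longrightarrow> x \<bullet> (M *v x) \<le> (v \<bullet> (M *v v)) * (x \<bullet> x)"
    using Rayleigh_quotient_attains_max[where blk = blk and i = i and M = M, OF \<open>blk j0 = i\<close>]
    by blast
  have "v \<noteq> 0" using v(1) by auto
  with v have eig: "is_block_eigenvalue M blk i (v \<bullet> (M *v v))"
    by (intro Rayleigh_maximizer_block_eigenvalue[OF sym max]) auto
  show ?thesis by (rule that[OF eig max])
qed

lemma inner_scaled_gram_matrix:
  fixes A :: "real^'m::finite^'n::finite"
  shows "x \<bullet> ((mu *\<^sub>R (transpose A ** A)) *v y) = mu * ((A *v x) \<bullet> (A *v y))"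
proof -
  have "(mu *\<^sub>R (transpose A ** A)) *v y = mu *\<^sub>R (transpose A *v (A *v y))"
    by (simp only: scaleR_matrix_vector_assoc[symmetric] matrix_vector_mul_assoc)
  then show ?thesis by (simp only: inner_scaleR_right inner_transpose_matrix_vector)
qed

lemma scaled_gram_block_bound:
  fixes A :: "real^'m::finite^'n::finite"
  assumes eig: "\<forall>c. is_block_eigenvalue (mu *\<^sub>R (transpose A ** A)) blk i c \<longrightarrow> c < eta"
    and x: "\<forall>j. blk j \<noteq> i \<longrightarrow> x$j = 0"
  shows "mu * ((A *v x) \<bullet> (A *v x)) \<le> eta * (x \<bullet> x)"
proof (cases "\<exists>j0. blk j0 = i")
  case True
  then obtain j0 where "blk j0 = i" ..
  then obtain c where "is_block_eigenvalue (mu *\<^sub>R (transpose A ** A)) blk i c"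
    and max: "mu * ((A *v x) \<bullet> (A *v x)) \<le> c * (x \<bullet> x)"
    using symmetric_block_eigenvalue_max[where blk = blk and i = i, OF _ \<open>blk j0 = i\<close>] x
    by (metis inner_scaled_gram_matrix inner_commute)
  then have "c < eta" using eig by blast
  then have "c * (x \<bullet> x) \<le> eta * (x \<bullet> x)" by (simp add: mult_right_mono)
  with max show ?thesis by linarith
next
  case False
  then have "x = 0" using x by (simp add: vec_eq_iff)
  then show ?thesis by simp
qed

lemma scaled_gram_block_eigenvalue_bound_pos:
  fixes A :: "real^'m::finite^'n::finite"
  assumes "0 \<le> mu" and eig: "\<forall>c. is_block_eigenvalue (mu *\<^sub>R (transpose A ** A)) blk i c \<longrightarrow> c < eta"
    and "blk j = i"
  shows "0 < eta"
proof -
  obtain c where "is_block_eigenvalue (mu *\<^sub>R (transpose A ** A)) blk i c"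
    and Rayleigh: "\<And>x. \<forall>j. blk j \<noteq> i \<longrightarrow> x$j = 0 \<Longrightarrow> mu * ((A *v x) \<bullet> (A *v x)) \<le> c * (x \<bullet> x)"
    using symmetric_block_eigenvalue_max[where blk = blk and i = i, OF _ \<open>blk j = i\<close>]
    by (metis inner_scaled_gram_matrix inner_commute)
  then have "c < eta" using eig by blast
  have "0 \<le> mu * ((A *v axis j 1) \<bullet> (A *v axis j 1))" using \<open>0 \<le> mu\<close> by simp
  also have "\<dots> \<le> c * (axis j 1 \<bullet> axis j (1::real))"
    using \<open>blk j = i\<close> by (intro Rayleigh) (auto simp: axis_def)
  also have "\<dots> = c" by simp
  finally show ?thesis using \<open>c < eta\<close> by simp
qed

lemma inner_quadratic_nonneg:
  fixes a u :: "'a::real_inner"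
  assumes "0 < mu"
  shows "0 \<le> mu * (a \<bullet> a) + 2 * (a \<bullet> u) + (u \<bullet> u) / mu"
proof -
  have "mu * (a \<bullet> a) + 2 * (a \<bullet> u) + (u \<bullet> u) / mu = (mu *\<^sub>R a + u) \<bullet> (mu *\<^sub>R a + u) / mu"
    using assms by (simp add: inner_add_left inner_add_right inner_commute field_simps)
  then show ?thesis using assms by simp
qed

lemma ppa_inner_block_nonneg:
  fixes A :: "real^'p::finite^'p"
  assumes mu: "0 < mu" and blk: "\<forall>j. blk j < K"
    and bound: "\<And>i x. i < K \<Longrightarrow> \<forall>j. blk j \<noteq> i \<longrightarrow> x$j = 0 \<Longrightarrow>
      mu * ((A *v x) \<bullet> (A *v x)) \<le> eta i * (x \<bullet> x)"
  shows "0 \<le> ppa_inner A (\<lambda>j. eta (blk j)) mu (mu / real (K + 1)) g g"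
proof -
  obtain b z u where g: "g = (b, z, u)" by (cases g)
  define bi where "bi i = (\<chi> j. if blk j = i then b$j else 0)" for i
  have b_sum: "b = (\<Sum>i<K. bi i)"
    using blk by (simp add: vec_eq_iff bi_def)
  have "(\<Sum>j\<in>UNIV. eta (blk j) * b$j * b$j)
      = (\<Sum>j\<in>UNIV. \<Sum>i<K. if blk j = i then eta i * (b$j * b$j) else 0)"
    using blk by (intro sum.cong) (auto simp: mult.assoc)
  also have "\<dots> = (\<Sum>i<K. eta i * (bi i \<bullet> bi i))"
    unfolding inner_vec_def bi_def sum_distrib_left by (subst sum.swap) (auto intro!: sum.cong)
  finally have weighted:
    "(\<Sum>j\<in>UNIV. eta (blk j) * b$j * b$j) = (\<Sum>i<K. eta i * (bi i \<bullet> bi i))" .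
  have "ppa_inner A (\<lambda>j. eta (blk j)) mu (mu / real (K + 1)) g g
      = (\<Sum>i<K. eta i * (bi i \<bullet> bi i) + 2 * ((A *v bi i) \<bullet> u) + (u \<bullet> u) / mu)
        + (mu * (z \<bullet> z) + 2 * (z \<bullet> - u) + ((- u) \<bullet> (- u)) / mu)"
  proof -
    have "(A *v b) \<bullet> u = (\<Sum>i<K. (A *v bi i) \<bullet> u)"
      by (subst b_sum) (simp add: vec.sum inner_sum_left)
    moreover have "(u \<bullet> u) / (mu / real (K + 1)) = (\<Sum>i<K. (u \<bullet> u) / mu) + (u \<bullet> u) / mu"
      using mu by (simp add: field_simps)
    ultimately show ?thesis
      unfolding g ppa_inner.simps weighted
      by (simp add: sum.distrib sum_distrib_left[symmetric])
  qed
  also have "0 \<le> \<dots>"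
  proof (rule add_nonneg_nonneg[OF sum_nonneg])
    fix i assume "i \<in> {..<K}"
    then have "mu * ((A *v bi i) \<bullet> (A *v bi i)) \<le> eta i * (bi i \<bullet> bi i)"
      by (intro bound) (auto simp: bi_def)
    then show "0 \<le> eta i * (bi i \<bullet> bi i) + 2 * ((A *v bi i) \<bullet> u) + (u \<bullet> u) / mu"
      using inner_quadratic_nonneg[OF mu, of "A *v bi i" u] by linarith
  qed (rule inner_quadratic_nonneg[OF mu])
  finally show ?thesis .
qed

lemma ippa_step_iff_ppa_update:
  "ippa_step X y lam blk K mu eta b z u b' z' u' \<longleftrightarrow>
     (b', z', u') = ppa_update (gram X) (transpose X *v y) (real CARD('n) * lam) mu
       (mu / real (K + 1)) (\<lambda>j. eta (blk j)) (b, z, u)"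
  for X :: "real^'p::finite^'n::finite"
  by (auto simp: ippa_step_def Let_def)

lemma HK_normsq_eq_ppa_inner:
  "HK_normsq A blk K mu eta b z u
     = ppa_inner A (\<lambda>j. eta (blk j)) mu (mu / real (K + 1)) (b, z, u) (b, z, u)"
  unfolding HK_normsq_def
  by (simp add: power2_eq_square inner_commute algebra_simps)

lemma ppa_step_eq_ippa_step_one_block:
  "ppa_step X y lam mu eta = ippa_step X y lam (\<lambda>_. 0) 1 mu (\<lambda>_. eta)"
  by (simp add: fun_eq_iff ppa_step_def ippa_step_def)

lemma H_normsq_eq_HK_normsq_one_block:
  fixes A :: "real^'p::finite^'p"
  shows "H_normsq A mu eta = HK_normsq A (\<lambda>_. 0) 1 mu (\<lambda>_. eta)"
proof (intro ext)
  fix b z u :: "real^'p"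
  have "eta * (b \<bullet> b) = (\<Sum>j\<in>UNIV. eta * (b$j)\<^sup>2)"
    by (simp add: inner_vec_def sum_distrib_left power2_eq_square)
  then show "H_normsq A mu eta b z u = HK_normsq A (\<lambda>_. 0) 1 mu (\<lambda>_. eta) b z u"
    unfolding H_normsq_def HK_normsq_def inner_transpose_matrix_vector
    by (simp add: inner_diff_right inner_commute)
qed

lemma is_eigenvalue_iff_one_block:
  "is_eigenvalue M c \<longleftrightarrow> is_block_eigenvalue M (\<lambda>_. 0) 0 c"
  by (simp add: is_eigenvalue_def is_block_eigenvalue_def vec_eq_iff)

theorem ippa_contraction:
  fixes X :: "real^'p::finite^'n::finite"
  assumes mu: "0 < mu" and blk: "\<forall>j. blk j < K"
    and eig: "\<forall>i<K. \<forall>c. is_block_eigenvalue (mu *\<^sub>R (transpose (gram X) ** gram X)) blk i c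
      \<longrightarrow> c < eta i"
    and step: "\<forall>t. ippa_step X y lam blk K mu eta
      (b t) (z t) (u t) (b (Suc t)) (z (Suc t)) (u (Suc t))"
  shows "HK_normsq (gram X) blk K mu eta
      (b (Suc t) - b (Suc (Suc t))) (z (Suc t) - z (Suc (Suc t))) (u (Suc t) - u (Suc (Suc t)))
    \<le> HK_normsq (gram X) blk K mu eta (b t - b (Suc t)) (z t - z (Suc t)) (u t - u (Suc t))"
proof -
  define e where "e = (\<lambda>j. eta (blk j))"
  define kap where "kap = mu / real (K + 1)"
  define g where "g t = (b t, z t, u t)" for t
  have "0 < e j" for j
    unfolding e_def
    by (rule scaled_gram_block_eigenvalue_bound_pos[where A = "gram X" and blk = blk,
          OF less_imp_le[OF mu] _ refl]) (use blk eig in blast)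
  moreover have "0 < kap" using mu by (simp add: kap_def)
  moreover have "0 \<le> ppa_inner (gram X) e mu kap h h" for h
    unfolding e_def kap_def
    using mu blk eig by (intro ppa_inner_block_nonneg scaled_gram_block_bound) auto
  moreover have "g (Suc t) = ppa_update (gram X) (transpose X *v y) (real CARD('n) * lam) mu kap e
      (g t)" for t
    using step unfolding g_def e_def kap_def ippa_step_iff_ppa_update by blast
  ultimately have "ppa_inner (gram X) e mu kap
        (g (Suc t) - g (Suc (Suc t))) (g (Suc t) - g (Suc (Suc t)))
      \<le> ppa_inner (gram X) e mu kap (g t - g (Suc t)) (g t - g (Suc t))"
    using mu by (intro ppa_update_contraction) auto
  then show ?thesis
    unfolding HK_normsq_eq_ppa_inner by (simp add: g_def e_def kap_def)
qed

theorem proposition4: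
  fixes X :: "real^'p::finite^'n::finite" and y :: "real^'n"
    and lam mu :: real and blk :: "'p \<Rightarrow> nat" and K :: nat
  assumes lam: "lam > 0" and mu: "mu > 0"
    and blk: "\<forall>j. blk j < K" and blocks_nonempty: "\<forall>i<K. \<exists>j. blk j = i"
  shows
   "(\<forall>(eta::real) (b::nat \<Rightarrow> real^'p) z u.
       (\<forall>c. is_eigenvalue (mu *\<^sub>R (transpose (gram X) ** gram X)) c \<longrightarrow> c < eta) \<longrightarrow>
       (\<forall>t. ppa_step X y lam mu eta (b t) (z t) (u t) (b (Suc t)) (z (Suc t)) (u (Suc t))) \<longrightarrow>
       (\<forall>t\<ge>1. H_normsq (gram X) mu eta (b t - b (t+1)) (z t - z (t+1)) (u t - u (t+1))
               \<le> H_normsq (gram X) mu eta (b (t-1) - b t) (z (t-1) - z t) (u (t-1) - u t)))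
    \<and>
    (\<forall>(eta::nat \<Rightarrow> real) (b::nat \<Rightarrow> real^'p) z u.
       (\<forall>i<K. \<forall>c. is_block_eigenvalue (mu *\<^sub>R (transpose (gram X) ** gram X)) blk i c
                    \<longrightarrow> c < eta i) \<longrightarrow>
       (\<forall>t. ippa_step X y lam blk K mu eta (b t) (z t) (u t) (b (Suc t)) (z (Suc t)) (u (Suc t))) \<longrightarrow>
       (\<forall>t\<ge>1. HK_normsq (gram X) blk K mu eta (b t - b (t+1)) (z t - z (t+1)) (u t - u (t+1))
               \<le> HK_normsq (gram X) blk K mu eta (b (t-1) - b t) (z (t-1) - z t) (u (t-1) - u t)))"
proof (intro conjI allI impI)
  fix eta :: real and b :: "nat \<Rightarrow> real^'p" and z u and t :: nat
  assume "\<forall>c. is_eigenvalue (mu *\<^sub>R (transpose (gram X) ** gram X)) c \<longrightarrow> c < eta"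
    and "\<forall>t. ppa_step X y lam mu eta (b t) (z t) (u t) (b (Suc t)) (z (Suc t)) (u (Suc t))"
    and "1 \<le> t"
  then show "H_normsq (gram X) mu eta (b t - b (t+1)) (z t - z (t+1)) (u t - u (t+1))
      \<le> H_normsq (gram X) mu eta (b (t-1) - b t) (z (t-1) - z t) (u (t-1) - u t)"
    using ippa_contraction[OF mu, where blk = "\<lambda>_. 0" and K = 1 and eta = "\<lambda>_. eta" and t = "t - 1"]
    unfolding is_eigenvalue_iff_one_block ppa_step_eq_ippa_step_one_block
      H_normsq_eq_HK_normsq_one_block
    by simp
next
  fix eta :: "nat \<Rightarrow> real" and b :: "nat \<Rightarrow> real^'p" and z u and t :: nat
  assume "\<forall>i<K. \<forall>c. is_block_eigenvalue (mu *\<^sub>R (transpose (gram X) ** gram X)) blk i c \<longrightarrow> c < eta i"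
    and "\<forall>t. ippa_step X y lam blk K mu eta (b t) (z t) (u t) (b (Suc t)) (z (Suc t)) (u (Suc t))"
    and "1 \<le> t"
  then show "HK_normsq (gram X) blk K mu eta (b t - b (t+1)) (z t - z (t+1)) (u t - u (t+1))
      \<le> HK_normsq (gram X) blk K mu eta (b (t-1) - b t) (z (t-1) - z t) (u (t-1) - u t)"
    using ippa_contraction[OF mu blk, where t = "t - 1"] by simp
qed

end
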